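(* Let $X\sim\mu=p^{\mathbb{Z}^d}$, $Y\sim\nu=q^{\mathbb{Z}^d}$ and let $\phi:X\to Y$ be a finitary homomorphism. Let $n,N\in\mathbb{N}$ with $N\ge2n+1$ and let $\hat\phi^n:A^{\mathbb{T}_N^d}\to(B\cup\{*\})^{\mathbb{T}_N^d}$ be the map of the $(\mathbb{T}_N^d,n)$-modeling of $\phi$. Then for every $\hat x\in A^{\mathbb{T}_N^d}$, \[\mu([\hat x])\le\nu([\hat\phi^n(\hat x)]).\]
   Context: $A,B$ are finite alphabets, $p,q$ probability vectors on $A,B$, $\mu=p^{\mathbb{Z}^d}$, $\nu=q^{\mathbb{Z}^d}$. A homomorphism $\phi:X\to Y$ is a measurable shift-commuting map $A^{\mathbb{Z}^d}\to B^{\mathbb{Z}^d}$ with $\phi_*\mu=\nu$. Its coding radius is $R_\phi(x)=\min\{n\in\mathbb{N}\cup\{\infty\}:\text{for }\mu\text{-a.e. }a,\ a|_{[-n,n]^d}=x|_{[-n,n]^d}\Rightarrow\phi(a)_0=\phi(x)_0\}$; $\phi$ is finitary if $R_\phi<\infty$ a.s. Let $*\notin B$. For $n\in\mathbb{N}$ define $\phi^n_0(x)=\phi(x)_0$ if $R_\phi(x)\le n$ and $\phi^n_0(x)=*$ otherwise; up to a $\mu$-null set, $\phi^n_0(x)$ is a function of $x|_{[-n,n]^d}$. Let $\mathbb{T}_N^d=\mathbb{Z}^d/(N\mathbb{Z})^d$; for a configuration $\hat x$ on $\mathbb{T}_N^d$ and $u\in\mathbb{Z}^d$ write $\hat x_u$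 for $\hat x_{u\bmod N}$. For $N\ge 2n+1$, $\hat\phi^n(\hat x)_u$ is the value of $\phi^n_0$ evaluated at the $N$-periodic extension of $T_{-u}\hat x$, where $(T_{-u}\hat x)_v=\hat x_{v+u}$. Cylinder sets: for $\hat x\in A^{\mathbb{T}_N^d}$, $[\hat x]=\{x\in A^{\mathbb{Z}^d}:x_u=\hat x_u\ \forall u\in[1,N]^d\}$ (so $\mu([\hat x])=\prod_{u\in\mathbb{T}_N^d}p(\hat x_u)$); for $\hat y\in(B\cup\{*\})^{\mathbb{T}_N^d}$, $[\hat y]=\{y\in B^{\mathbb{Z}^d}:\hat y_u\in\{*,y_u\}\ \forall u\in[1,N]^d\}$. *)

theory Defs
  imports "HOL-Probability.Probability"
begin

text \<open>Sites of Z^d are functions 'd \<Rightarrow> int for a finite index type 'd (d = CARD('d)).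
Configurations are functions from sites to the alphabet.  The symbol * is None.\<close>

definition bern :: "'a pmf \<Rightarrow> (('d::finite \<Rightarrow> int) \<Rightarrow> 'a) measure" where
  "bern p = PiM UNIV (\<lambda>_. measure_pmf p)"

definition shift :: "('d \<Rightarrow> int) \<Rightarrow> (('d \<Rightarrow> int) \<Rightarrow> 'a) \<Rightarrow> (('d \<Rightarrow> int) \<Rightarrow> 'a)" where
  "shift u x = (\<lambda>v. x (\<lambda>i. v i + u i))"

definition origin :: "'d \<Rightarrow> int" where "origin = (\<lambda>_. 0)"

definition box :: "nat \<Rightarrow> ('d::finite \<Rightarrow> int) set" where
  "box n = {v. \<forall>i. \<bar>v i\<bar> \<le> int n}"

definition homomorphism ::
  "'a pmf \<Rightarrow> 'b pmf \<Rightarrow> ((('d::finite \<Rightarrow> int) \<Rightarrow> 'a) \<Rightarrow> (('d \<Rightarrow> int) \<Rightarrow> 'b)) \<Rightarrow> bool" where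
  "homomorphism p q \<phi> \<longleftrightarrow> \<phi> \<in> bern p \<rightarrow>\<^sub>M bern q \<and>
     (\<forall>u x. \<phi> (shift u x) = shift u (\<phi> x)) \<and> distr (bern p) (bern q) \<phi> = bern q"

definition coding_radius ::
  "'a pmf \<Rightarrow> ((('d::finite \<Rightarrow> int) \<Rightarrow> 'a) \<Rightarrow> (('d \<Rightarrow> int) \<Rightarrow> 'b)) \<Rightarrow> (('d \<Rightarrow> int) \<Rightarrow> 'a) \<Rightarrow> enat" where
  "coding_radius p \<phi> x =
    (let P = (\<lambda>n. AE a in bern p. (\<forall>v\<in>box n. a v = x v) \<longrightarrow> \<phi> a origin = \<phi> x origin)
     in if \<exists>n. P n then enat (LEAST n. P n) else \<infinity>)"

definition finitary ::
  "'a pmf \<Rightarrow> ((('d::finite \<Rightarrow> int) \<Rightarrow> 'a) \<Rightarrow> (('d \<Rightarrow> int) \<Rightarrow> 'b)) \<Rightarrow> bool" where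
  "finitary p \<phi> \<longleftrightarrow> (AE x in bern p. coding_radius p \<phi> x < \<infinity>)"

definition phi_n0 ::
  "'a pmf \<Rightarrow> ((('d::finite \<Rightarrow> int) \<Rightarrow> 'a) \<Rightarrow> (('d \<Rightarrow> int) \<Rightarrow> 'b)) \<Rightarrow> nat \<Rightarrow> (('d \<Rightarrow> int) \<Rightarrow> 'a) \<Rightarrow> 'b option" where
  "phi_n0 p \<phi> n x = (if coding_radius p \<phi> x \<le> enat n then Some (\<phi> x origin) else None)"

text \<open>Torus T_N^d: a configuration xh on the torus is given by its values on
representatives {0..N-1}^d; xh_u is xh evaluated at u mod N.\<close>
definition tor :: "nat \<Rightarrow> ('d \<Rightarrow> int) \<Rightarrow> ('d \<Rightarrow> int)" where
  "tor N u = (\<lambda>i. u i mod int N)"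

text \<open>The (T_N^d,n)-modeling map: the value at u is the (a.e. unique) value of the
function phi^n_0 of the window x|[-n,n]^d on the window of the N-periodic extension of T_{-u} xh.\<close>
definition phi_hat ::
  "'a pmf \<Rightarrow> ((('d::finite \<Rightarrow> int) \<Rightarrow> 'a) \<Rightarrow> (('d \<Rightarrow> int) \<Rightarrow> 'b)) \<Rightarrow> nat \<Rightarrow> nat
     \<Rightarrow> (('d \<Rightarrow> int) \<Rightarrow> 'a) \<Rightarrow> (('d \<Rightarrow> int) \<Rightarrow> 'b option)" where
  "phi_hat p \<phi> n N xh = (\<lambda>u. THE c. AE a in bern p.
       (\<forall>v\<in>box n. a v = xh (tor N (\<lambda>i. v i + u i))) \<longrightarrow> phi_n0 p \<phi> n a = c)"

definition cube :: "nat \<Rightarrow> ('d::finite \<Rightarrow> int) set" where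
  "cube N = {u. \<forall>i. 1 \<le> u i \<and> u i \<le> int N}"

definition cylA :: "nat \<Rightarrow> (('d::finite \<Rightarrow> int) \<Rightarrow> 'a) \<Rightarrow> (('d \<Rightarrow> int) \<Rightarrow> 'a) set" where
  "cylA N xh = {x. \<forall>u\<in>cube N. x u = xh (tor N u)}"

definition cylB :: "nat \<Rightarrow> (('d::finite \<Rightarrow> int) \<Rightarrow> 'b option) \<Rightarrow> (('d \<Rightarrow> int) \<Rightarrow> 'b) set" where
  "cylB N yh = {y. \<forall>u\<in>cube N. yh (tor N u) \<in> {None, Some (y u)}}"

end

theory Submission
  imports Defs
begin

(* If x agrees with the N-periodic extension of xh on a block of (M + 2)^d periods, then for
   every site u of the inner block of M^d periods the window u + [-n,n]^d lies in the outer
   block; by shift invariance, almost surely phi(x)_u is then the value phi_hat assigns to u,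
   unless that value is *.  Pushing forward along phi gives
   mu([xh])^((M+2)^d) <= nu([phi_hat xh])^(M^d), and letting M tend to infinity gives the claim. *)

definition cylinder :: "'s set \<Rightarrow> ('s \<Rightarrow> 'a set) \<Rightarrow> ('s \<Rightarrow> 'a) set" where
  "cylinder F S = {x. \<forall>v\<in>F. x v \<in> S v}"

lemma prob_space_bern: "prob_space (bern p)"
  unfolding bern_def by (rule prob_space_PiM) (simp add: prob_space_measure_pmf)

lemma cylinder_eq_prod_emb:
  "cylinder F S = prod_emb UNIV (\<lambda>_. measure_pmf p) F (PiE F S)"
  by (auto simp: prod_emb_def cylinder_def space_PiM)

lemma sets_bern_cylinder: "finite F \<Longrightarrow> cylinder F S \<in> sets (bern p)"
  unfolding bern_def cylinder_eq_prod_emb[of F S p] by (rule sets_PiM_I) auto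

lemma measure_bern_cylinder:
  assumes "finite F"
  shows "measure (bern p) (cylinder F S) = (\<Prod>v\<in>F. measure_pmf.prob p (S v))"
proof -
  have "emeasure (bern p) (cylinder F S) = (\<Prod>v\<in>F. emeasure (measure_pmf p) (S v))"
    unfolding bern_def cylinder_eq_prod_emb[of F S p]
    by (rule emeasure_PiM_emb) (auto simp: assms prob_space_measure_pmf)
  then show ?thesis
    unfolding finite_measure.emeasure_eq_measure[OF prob_space.finite_measure[OF prob_space_bern]]
      measure_pmf.emeasure_eq_measure
    by (simp add: prod_ennreal prod_nonneg)
qed

lemma shift_measurable: "Defs.shift u \<in> bern p \<rightarrow>\<^sub>M bern p"
  unfolding bern_def shift_def by (rule measurable_PiM_single') auto

lemma distr_bern_shift: "distr (bern p) (bern p) (Defs.shift u) = bern p"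
proof -
  have "inj (\<lambda>v. \<lambda>i. v i + u i)"
    by (auto simp: inj_on_def fun_eq_iff)
  then have "distr (PiM UNIV (\<lambda>_. measure_pmf p)) (PiM UNIV (\<lambda>_. measure_pmf p))
      (\<lambda>x. \<lambda>v\<in>UNIV. x (\<lambda>i. v i + u i)) = PiM UNIV (\<lambda>_. measure_pmf p)"
    using distr_PiM_reindex[of UNIV "\<lambda>_. measure_pmf p" "\<lambda>v. \<lambda>i. v i + u i" UNIV]
    by (simp add: prob_space_measure_pmf)
  then show ?thesis by (simp add: bern_def shift_def[abs_def] restrict_def)
qed

lemma AE_bern_shift:
  assumes "AE x in bern p. P x"
  shows "AE x in bern p. P (Defs.shift u x)"
proof -
  have "AE x in distr (bern p) (bern p) (Defs.shift u). P x"
    unfolding distr_bern_shift by (rule assms)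
  then show ?thesis by (rule AE_distrD[OF shift_measurable])
qed

lemma measure_le_of_AE_maps_into:
  assumes "finite_measure M" "f \<in> M \<rightarrow>\<^sub>M N" "distr M N f = N" "B \<in> sets N"
    and "AE x in M. x \<in> A \<longrightarrow> f x \<in> B"
  shows "measure M A \<le> measure N B"
proof -
  have "AE x in M. x \<in> A \<longrightarrow> x \<in> f -` B \<inter> space M"
    using assms(5) AE_space by eventually_elim auto
  then have "measure M A \<le> measure M (f -` B \<inter> space M)"
    by (rule finite_measure.finite_measure_mono_AE[OF assms(1) _ measurable_sets[OF assms(2,4)]])
  also have "\<dots> = measure (distr M N f) B"
    using assms(2,4) by (simp add: measure_distr)
  finally show ?thesis
    using assms(3) by simp
qed

lemma AE_constant_on_positive_set_unique:
  assumes "S \<in> sets M" "measure M S > 0"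
    and "AE x in M. x \<in> S \<longrightarrow> f x = c" "AE x in M. x \<in> S \<longrightarrow> f x = c'"
  shows "c = c'"
proof (rule ccontr)
  assume "c \<noteq> c'"
  have "AE x in M. x \<notin> S"
    using assms(3,4) by eventually_elim (use \<open>c \<noteq> c'\<close> in auto)
  then have "emeasure M S = 0"
    using AE_iff_measurable[OF assms(1), of "\<lambda>x. x \<notin> S"] sets.sets_into_space[OF assms(1)]
    by auto
  with assms(2) show False
    by (simp add: measure_def)
qed

lemma box_mono: "m \<le> n \<Longrightarrow> box m \<subseteq> box n"
  by (auto simp: box_def) (meson of_nat_le_iff order_trans)

lemma box_eq_PiE: "box n = PiE UNIV (\<lambda>_. {-int n..int n})"
  by (auto simp: box_def PiE_def Pi_def extensional_def abs_le_iff; metis minus_le_iff)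

lemma finite_box [simp]: "finite (box n)"
  by (simp add: box_eq_PiE finite_PiE)

lemma coding_radius_le_iff:
  "coding_radius p \<phi> a \<le> enat n \<longleftrightarrow>
    (AE a' in bern p. (\<forall>v\<in>box n. a' v = a v) \<longrightarrow> \<phi> a' origin = \<phi> a origin)"
  (is "_ \<longleftrightarrow> ?P n")
proof
  assume "coding_radius p \<phi> a \<le> enat n"
  then have ex: "\<exists>m. ?P m" and le: "(LEAST m. ?P m) \<le> n"
    by (auto simp: coding_radius_def Let_def split: if_splits)
  have "?P (LEAST m. ?P m)"
    using ex by (rule LeastI_ex)
  then show "?P n"
    by eventually_elim (use box_mono[OF le] in blast)
next
  assume "?P n"
  then show "coding_radius p \<phi> a \<le> enat n"
    by (auto simp: coding_radius_def Let_def intro: Least_le)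
qed

lemma ex_AE_phi_n0_on_window:
  "\<exists>c. AE a in bern p. (\<forall>v\<in>box n. a v = t v) \<longrightarrow> phi_n0 p \<phi> n a = c"
proof (cases "\<exists>b. AE a in bern p. (\<forall>v\<in>box n. a v = t v) \<longrightarrow> \<phi> a origin = b")
  case True
  then obtain b where b: "AE a in bern p. (\<forall>v\<in>box n. a v = t v) \<longrightarrow> \<phi> a origin = b"
    by blast
  have "AE a in bern p. (\<forall>v\<in>box n. a v = t v) \<longrightarrow> phi_n0 p \<phi> n a = Some b"
    using b
  proof eventually_elim
    case (elim a)
    show ?case
    proof
      assume a: "\<forall>v\<in>box n. a v = t v"
      have "AE a' in bern p. (\<forall>v\<in>box n. a' v = a v) \<longrightarrow> \<phi> a' origin = \<phi> a origin"
        using b by eventually_elim (use elim a in auto)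
      then have "coding_radius p \<phi> a \<le> enat n"
        by (simp only: coding_radius_le_iff)
      then show "phi_n0 p \<phi> n a = Some b"
        using elim a by (simp add: phi_n0_def)
    qed
  qed
  then show ?thesis ..
next
  case False
  have "phi_n0 p \<phi> n a = None" if a: "\<forall>v\<in>box n. a v = t v" for a
  proof (rule ccontr)
    assume "phi_n0 p \<phi> n a \<noteq> None"
    then have "coding_radius p \<phi> a \<le> enat n"
      by (simp add: phi_n0_def split: if_splits)
    then have "AE a' in bern p. (\<forall>v\<in>box n. a' v = a v) \<longrightarrow> \<phi> a' origin = \<phi> a origin"
      by (simp only: coding_radius_le_iff)
    then have "AE a' in bern p. (\<forall>v\<in>box n. a' v = t v) \<longrightarrow> \<phi> a' origin = \<phi> a origin"
      by eventually_elim (use a in auto)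
    with False show False
      by blast
  qed
  then show ?thesis
    by (intro exI[of _ None] AE_I2) blast
qed

(* Positivity of the window is what makes the THE in phi_hat_def determined: on a null window
   every value c satisfies the defining property. *)
lemma AE_phi_n0_eq_phi_hat:
  assumes "measure (bern p) {a. \<forall>v\<in>box n. a v = xh (tor N (\<lambda>i. v i + u i))} > 0"
  shows "AE a in bern p. (\<forall>v\<in>box n. a v = xh (tor N (\<lambda>i. v i + u i))) \<longrightarrow>
           phi_n0 p \<phi> n a = phi_hat p \<phi> n N xh u"
proof -
  let ?W = "{a. \<forall>v\<in>box n. a v = xh (tor N (\<lambda>i. v i + u i))}"
  let ?Q = "\<lambda>c. AE a in bern p. a \<in> ?W \<longrightarrow> phi_n0 p \<phi> n a = c"
  have "?W = cylinder (box n) (\<lambda>v. {xh (tor N (\<lambda>i. v i + u i))})"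
    by (simp add: cylinder_def)
  then have "?W \<in> sets (bern p)"
    by (simp add: sets_bern_cylinder)
  then have "\<exists>!c. ?Q c"
    using ex_AE_phi_n0_on_window AE_constant_on_positive_set_unique[OF _ assms] by auto
  then have "?Q (THE c. ?Q c)"
    by (rule theI')
  then show ?thesis
    by (simp add: phi_hat_def)
qed

lemma phi_n0_mem: "phi_n0 p \<phi> n a \<in> {None, Some (\<phi> a origin)}"
  by (simp add: phi_n0_def)

lemma AE_phi_hat_mem:
  assumes commutes: "\<And>u x. \<phi> (Defs.shift u x) = Defs.shift u (\<phi> x)"
    and "measure (bern p) {a. \<forall>v\<in>box n. a v = xh (tor N (\<lambda>i. v i + u i))} > 0"
  shows "AE x in bern p. (\<forall>v\<in>box n. x (\<lambda>i. v i + u i) = xh (tor N (\<lambda>i. v i + u i))) \<longrightarrow>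
           phi_hat p \<phi> n N xh u \<in> {None, Some (\<phi> x u)}"
  using AE_bern_shift[OF AE_phi_n0_eq_phi_hat[OF assms(2), where \<phi>=\<phi>], of u]
proof eventually_elim
  case (elim x)
  have "\<phi> (Defs.shift u x) origin = \<phi> x u"
    unfolding commutes by (simp add: shift_def origin_def)
  then show ?case
    using elim phi_n0_mem[of p \<phi> n "Defs.shift u x"] by (auto simp: shift_def)
qed

definition block :: "int \<Rightarrow> int \<Rightarrow> nat \<Rightarrow> ('d::finite \<Rightarrow> int) set" where
  "block lo hi N = {z. \<forall>i. lo * int N + 1 \<le> z i \<and> z i \<le> hi * int N}"

lemma block_eq_PiE: "block lo hi N = PiE UNIV (\<lambda>_. {lo * int N + 1..hi * int N})"
  by (auto simp: block_def PiE_def extensional_def)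

lemma finite_block [simp]: "finite (block lo hi N)"
  by (simp add: block_eq_PiE finite_PiE)

lemma cube_eq_block: "cube N = block 0 1 N"
  by (simp add: cube_def block_def)

lemma finite_cube [simp]: "finite (cube N)"
  by (simp add: cube_eq_block)

lemma div_mem_atLeastLessThan_iff:
  fixes z lo hi N :: int
  assumes "N > 0"
  shows "(z - 1) div N \<in> {lo..<hi} \<longleftrightarrow> z \<in> {lo * N + 1..hi * N}"
proof -
  have "(z - 1) div N - c = (z - 1 - c * N) div N" for c
    using div_mult_self1[of N "z - 1" "- c"] assms by simp
  then have "lo \<le> (z - 1) div N \<longleftrightarrow> 0 \<le> z - 1 - lo * N"
    "(z - 1) div N < hi \<longleftrightarrow> z - 1 - hi * N < 0"
    using pos_imp_zdiv_nonneg_iff[OF assms] pos_imp_zdiv_neg_iff[OF assms]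
    by (metis diff_ge_0_iff_ge, metis diff_less_0_iff_less)
  then show ?thesis
    by auto
qed

lemma mult_add_div_mod_eq:
  fixes k w N :: int
  assumes "w \<in> {1..N}"
  shows "(N * k + w - 1) div N = k" "(N * k + w - 1) mod N + 1 = w"
  using assms by (simp_all add: add_diff_eq[symmetric])

lemma bij_betw_block:
  assumes "N > 0"
  shows "bij_betw (\<lambda>(k, w). \<lambda>i. int N * k i + w i)
           (PiE UNIV (\<lambda>_. {lo..<hi}) \<times> cube N) (block lo hi N :: ('d::finite \<Rightarrow> int) set)"
proof -
  have N: "int N > 0"
    using assms by simp
  have cube: "w \<in> cube N \<longleftrightarrow> (\<forall>i. w i \<in> {1..int N})" for w :: "'d \<Rightarrow> int"
    by (auto simp: cube_def)
  have block: "z \<in> block lo hi N \<longleftrightarrow> (\<forall>i. (z i - 1) div int N \<in> {lo..<hi})" for z :: "'d \<Rightarrow> int"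
    by (simp add: block_eq_PiE PiE_iff div_mem_atLeastLessThan_iff[OF N]
        del: atLeastAtMost_iff atLeastLessThan_iff)
  have mod_bound: "x mod int N + 1 \<le> int N" for x
    using pos_mod_bound[OF N, of x] by linarith
  show ?thesis
    by (rule bij_betw_byWitness[where f' = "\<lambda>z. (\<lambda>i. (z i - 1) div int N, \<lambda>i. (z i - 1) mod int N + 1)"])
      (use N mod_bound in \<open>auto simp: block cube PiE_iff mult_add_div_mod_eq fun_eq_iff add.assoc[symmetric]\<close>)
qed

lemma tor_mult_add: "tor N (\<lambda>i. int N * k i + w i) = tor N w"
  by (simp add: tor_def fun_eq_iff)

lemma phi_hat_tor: "phi_hat p \<phi> n N xh (tor N u) = phi_hat p \<phi> n N xh u"
  by (simp add: phi_hat_def tor_def mod_add_right_eq)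

lemma prod_block_periodic:
  fixes g :: "('d::finite \<Rightarrow> int) \<Rightarrow> 'b::comm_monoid_mult"
  assumes "N > 0" and periodic: "\<And>k w. g (\<lambda>i. int N * k i + w i) = g w"
  shows "(\<Prod>z\<in>block lo hi N. g z) = (\<Prod>w\<in>cube N. g w) ^ (nat (hi - lo) ^ CARD('d))"
proof -
  let ?K = "PiE (UNIV :: 'd set) (\<lambda>_. {lo..<hi})"
  have "(\<Prod>z\<in>block lo hi N. g z) = (\<Prod>(k, w)\<in>?K \<times> cube N. g (\<lambda>i. int N * k i + w i))"
    using prod.reindex_bij_betw[OF bij_betw_block[OF assms(1)], of g lo hi]
    by (simp add: case_prod_beta')
  also have "\<dots> = (\<Prod>k\<in>?K. \<Prod>w\<in>cube N. g w)"
    by (simp add: prod.cartesian_product[symmetric] periodic)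
  also have "\<dots> = (\<Prod>w\<in>cube N. g w) ^ (nat (hi - lo) ^ CARD('d))"
    by (simp add: card_PiE)
  finally show ?thesis .
qed

lemma measure_cylinder_block_periodic:
  fixes S :: "('d::finite \<Rightarrow> int) \<Rightarrow> 'a set"
  assumes "N > 0"
  shows "measure (bern p) (cylinder (block lo hi N) (\<lambda>v. S (tor N v)))
           = measure (bern p) (cylinder (cube N) (\<lambda>v. S (tor N v))) ^ (nat (hi - lo) ^ CARD('d))"
  using prod_block_periodic[OF assms, of "\<lambda>v. measure_pmf.prob p (S (tor N v))"]
  by (simp add: measure_bern_cylinder tor_mult_add)

lemma add_box_mem_block:
  assumes "n \<le> N" "u \<in> block (lo + 1) hi N" "v \<in> box n"
  shows "(\<lambda>i. v i + u i) \<in> block lo (hi + 1) N"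
  unfolding block_def
proof (intro CollectI allI)
  fix i
  have "\<bar>v i\<bar> \<le> int n"
    using assms(3) by (simp add: box_def)
  then have "\<bar>v i\<bar> \<le> int N"
    using assms(1) by (meson of_nat_le_iff order_trans)
  moreover have "(lo + 1) * int N + 1 \<le> u i" "u i \<le> hi * int N"
    using assms(2) by (auto simp: block_def)
  ultimately show "lo * int N + 1 \<le> v i + u i \<and> v i + u i \<le> (hi + 1) * int N"
    by (auto simp: algebra_simps abs_le_iff)
qed

lemma measure_window_pos:
  assumes "\<And>z. pmf p (xh (tor N z)) > 0"
  shows "measure (bern p) {a. \<forall>v\<in>box n. a v = xh (tor N (\<lambda>i. v i + u i))} > 0"
proof -
  have "{a. \<forall>v\<in>box n. a v = xh (tor N (\<lambda>i. v i + u i))}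
      = cylinder (box n) (\<lambda>v. {xh (tor N (\<lambda>i. v i + u i))})"
    by (simp add: cylinder_def)
  then show ?thesis
    using assms by (simp add: measure_bern_cylinder measure_pmf_single prod_pos)
qed

lemma AE_cylinder_block_maps_into:
  fixes \<phi> :: "(('d::finite \<Rightarrow> int) \<Rightarrow> 'a) \<Rightarrow> (('d \<Rightarrow> int) \<Rightarrow> 'b)"
  assumes commutes: "\<And>u x. \<phi> (Defs.shift u x) = Defs.shift u (\<phi> x)"
    and "n \<le> N" and pos: "\<And>z. pmf p (xh (tor N z)) > 0"
  shows "AE x in bern p. x \<in> cylinder (block lo (hi + 1) N) (\<lambda>v. {xh (tor N v)}) \<longrightarrow>
           \<phi> x \<in> cylinder (block (lo + 1) hi N)
                   (\<lambda>v. {c. phi_hat p \<phi> n N xh (tor N v) \<in> {None, Some c}})"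
proof -
  have "AE x in bern p. \<forall>u\<in>block (lo + 1) hi N.
          x \<in> cylinder (block lo (hi + 1) N) (\<lambda>v. {xh (tor N v)}) \<longrightarrow>
          phi_hat p \<phi> n N xh (tor N u) \<in> {None, Some (\<phi> x u)}"
  proof (rule AE_finite_allI[OF finite_block])
    fix u :: "'d \<Rightarrow> int" assume u: "u \<in> block (lo + 1) hi N"
    show "AE x in bern p. x \<in> cylinder (block lo (hi + 1) N) (\<lambda>v. {xh (tor N v)}) \<longrightarrow>
            phi_hat p \<phi> n N xh (tor N u) \<in> {None, Some (\<phi> x u)}"
      using AE_phi_hat_mem[OF commutes measure_window_pos[where p = p and xh = xh and N = N, OF pos], of n u]
      by eventually_elim
        (use add_box_mem_block[OF \<open>n \<le> N\<close> u] in \<open>auto simp: cylinder_def phi_hat_tor\<close>)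
  qed
  then show ?thesis
    by eventually_elim (auto simp: cylinder_def)
qed

lemma measure_cylA_pow_le_measure_cylB_pow:
  fixes \<phi> :: "(('d::finite \<Rightarrow> int) \<Rightarrow> 'a) \<Rightarrow> (('d \<Rightarrow> int) \<Rightarrow> 'b)"
  assumes hom: "homomorphism p q \<phi>" and "N > 0" "n \<le> N"
    and pos: "\<And>z. pmf p (xh (tor N z)) > 0"
  shows "measure (bern p) (cylA N xh) ^ ((M + 2) ^ CARD('d))
           \<le> measure (bern q) (cylB N (phi_hat p \<phi> n N xh)) ^ (M ^ CARD('d))"
proof -
  let ?S = "\<lambda>v. {c. phi_hat p \<phi> n N xh v \<in> {None, Some c}}"
  have cylA: "cylA N xh = cylinder (cube N) (\<lambda>v. {xh (tor N v)})"
    by (simp add: cylA_def cylinder_def)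
  have cylB: "cylB N (phi_hat p \<phi> n N xh) = cylinder (cube N) (\<lambda>v. ?S (tor N v))"
    by (simp add: cylB_def cylinder_def)
  from hom have meas: "\<phi> \<in> bern p \<rightarrow>\<^sub>M bern q" and distr: "distr (bern p) (bern q) \<phi> = bern q"
    and commutes: "\<And>u x. \<phi> (Defs.shift u x) = Defs.shift u (\<phi> x)"
    by (simp_all add: homomorphism_def)
  have "measure (bern p) (cylA N xh) ^ ((M + 2) ^ CARD('d))
      = measure (bern p) (cylinder (block 0 (int M + 1 + 1) N) (\<lambda>v. {xh (tor N v)}))"
    using measure_cylinder_block_periodic[OF \<open>N > 0\<close>, of p 0 "int M + 1 + 1" "\<lambda>v. {xh v}"]
    by (simp add: cylA nat_add_distrib)
  also have "\<dots> \<le> measure (bern q) (cylinder (block (0 + 1) (int M + 1) N) (\<lambda>v. ?S (tor N v)))"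
    by (rule measure_le_of_AE_maps_into[OF prob_space.finite_measure[OF prob_space_bern] meas distr
          sets_bern_cylinder[OF finite_block]
          AE_cylinder_block_maps_into[where p = p and xh = xh and N = N, OF commutes \<open>n \<le> N\<close> pos]])
  also have "\<dots> = measure (bern q) (cylB N (phi_hat p \<phi> n N xh)) ^ (M ^ CARD('d))"
    using measure_cylinder_block_periodic[OF \<open>N > 0\<close>, of q 1 "int M + 1" ?S]
    by (simp add: cylB)
  finally show ?thesis .
qed

lemma le_of_pow_le_pow_margin:
  fixes a b :: real
  assumes "0 \<le> b" and le: "\<And>M. a ^ ((M + 2) ^ D) \<le> b ^ (M ^ D)"
  shows "a \<le> b"
proof (cases "a \<le> 0")
  case True
  with \<open>0 \<le> b\<close> show ?thesis by linarith
next
  case False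
  then have "a > 0" by simp
  have "0 < a ^ ((1 + 2) ^ D)"
    using \<open>a > 0\<close> by simp
  also have "\<dots> \<le> b"
    using le[of 1] by simp
  finally have "b > 0" .
  have bound: "(1 + 2 / real M) ^ D * ln a \<le> ln b" if "M > 0" for M :: nat
  proof -
    have "ln (a ^ ((M + 2) ^ D)) \<le> ln (b ^ (M ^ D))"
      using le[of M] \<open>a > 0\<close> \<open>b > 0\<close> by simp
    then have "real ((M + 2) ^ D) * ln a \<le> real (M ^ D) * ln b"
      using \<open>a > 0\<close> \<open>b > 0\<close> by (simp only: ln_realpow)
    then have "(2 + real M) ^ D * ln a \<le> real M ^ D * ln b"
      by simp
    moreover have "(1 + 2 / real M) ^ D = (2 + real M) ^ D / real M ^ D"
      using that by (simp add: field_simps flip: power_divide)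
    ultimately show ?thesis
      using that by (simp add: field_simps)
  qed
  have "eventually (\<lambda>M. (1 + 2 / real M) ^ D * ln a \<le> ln b) sequentially"
    using eventually_gt_at_top[of 0] by eventually_elim (rule bound)
  moreover have "(\<lambda>M. (1 + 2 / real M) ^ D * ln a) \<longlonglongrightarrow> (1 + 0) ^ D * ln a"
    by (intro tendsto_intros)
  ultimately have "ln a \<le> ln b"
    by (simp add: tendsto_upperbound)
  then show ?thesis
    using \<open>a > 0\<close> \<open>b > 0\<close> by simp
qed

lemma measure_cylA_eq_0:
  assumes "N > 0" "pmf p (xh (tor N z)) = 0"
  shows "measure (bern p) (cylA N xh) = 0"
proof -
  define w where "w = (\<lambda>i. (z i - 1) mod int N + 1)"
  have "w \<in> cube N"
    using assms(1) by (auto simp: w_def cube_def pos_mod_bound add1_zle_eq)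
  moreover have "tor N w = tor N z"
    by (simp add: w_def tor_def fun_eq_iff mod_add_left_eq)
  ultimately have "\<exists>v\<in>cube N. pmf p (xh (tor N v)) = 0"
    using assms(2) by metis
  moreover have "cylA N xh = cylinder (cube N) (\<lambda>v. {xh (tor N v)})"
    by (simp add: cylA_def cylinder_def)
  ultimately show ?thesis
    by (simp add: measure_bern_cylinder measure_pmf_single)
qed

theorem lemma5:
  fixes p :: "'a::finite pmf" and q :: "'b::finite pmf"
    and \<phi> :: "(('d::finite \<Rightarrow> int) \<Rightarrow> 'a) \<Rightarrow> (('d \<Rightarrow> int) \<Rightarrow> 'b)"
    and n N :: nat and xh :: "('d \<Rightarrow> int) \<Rightarrow> 'a"
  assumes "homomorphism p q \<phi>"
    and "finitary p \<phi>"
    and "N \<ge> 2 * n + 1"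
  shows "measure (bern p) (cylA N xh) \<le> measure (bern q) (cylB N (phi_hat p \<phi> n N xh))"
proof -
  have "N > 0" "n \<le> N"
    using assms(3) by simp_all
  show ?thesis
  proof (cases "\<forall>z. pmf p (xh (tor N z)) > 0")
    case True
    then have "measure (bern p) (cylA N xh) ^ ((M + 2) ^ CARD('d))
        \<le> measure (bern q) (cylB N (phi_hat p \<phi> n N xh)) ^ (M ^ CARD('d))" for M
      using measure_cylA_pow_le_measure_cylB_pow[OF assms(1) \<open>N > 0\<close> \<open>n \<le> N\<close>] by blast
    then show ?thesis
      by (rule le_of_pow_le_pow_margin[OF measure_nonneg])
  next
    case False
    then obtain z where "\<not> pmf p (xh (tor N z)) > 0"
      by blast
    then have "pmf p (xh (tor N z)) = 0"
      using pmf_nonneg[of p "xh (tor N z)"] by linarith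
    then have "measure (bern p) (cylA N xh) = 0"
      by (rule measure_cylA_eq_0[OF \<open>N > 0\<close>])
    then show ?thesis
      by simp
  qed
qed

end
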